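(* Let $F$ and $H$ be graphs such that $F$ is a subgraph of a blow-up of $H$, and let $r\ge |V(F)|$. Then $\widehat{\mathrm{ex}}_r(n,H,\text{Berge-}F)=o(n^{|V(H)|})$ as $n\to\infty$.
   Context: A blow-up of $H$ is obtained by replacing each vertex of $H$ by an independent set and each edge by a complete bipartite graph between the corresponding sets. A hypergraph $\mathcal{H}$ is a Berge copy of a graph $G$ if $V(G)\subseteq V(\mathcal{H})$ and there is a bijection $f:E(G)\to E(\mathcal{H})$ with $e\subseteq f(e)$ for all $e$; Berge-$F$-free means containing no Berge copy of $F$. The shadow graph of $\mathcal{H}$ is the graph on $V(\mathcal{H})$ where $uv$ is an edge iff some hyperedge contains $u$ and $v$. $\widehat{\mathrm{ex}}_r(n,H,\text{Berge-}F)$ is the maximum number of copies of $H$ in the shadow graph of an $r$-uniform Berge-$F$-free $n$-vertex hypergraph. *)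

theory Defs
  imports Main "HOL-Library.Landau_Symbols"
begin

definition graph :: "'a set \<Rightarrow> 'a set set \<Rightarrow> bool" where
  "graph V E \<longleftrightarrow> finite V \<and> (\<forall>e\<in>E. e \<subseteq> V \<and> card e = 2)"

text \<open>(VB,EB) is a blow-up of (VH,EH): each vertex v of H is replaced by the independent set
  of vertices x with \<pi> x = v, and each edge by the complete bipartite graph between the
  corresponding sets.\<close>
definition is_blowup :: "'a set \<Rightarrow> 'a set set \<Rightarrow> 'b set \<Rightarrow> 'b set set \<Rightarrow> bool" where
  "is_blowup VB EB VH EH \<longleftrightarrow> finite VB \<and> (\<exists>\<pi>. \<pi> ` VB \<subseteq> VH \<and>
     EB = {{x, y} | x y. x \<in> VB \<and> y \<in> VB \<and> {\<pi> x, \<pi> y} \<in> EH})"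

text \<open>F is a subgraph of a blow-up of H (taking the blow-up on F's vertex type, w.l.o.g.).\<close>
definition subgraph_of_blowup :: "'a set \<Rightarrow> 'a set set \<Rightarrow> 'b set \<Rightarrow> 'b set set \<Rightarrow> bool" where
  "subgraph_of_blowup VF EF VH EH \<longleftrightarrow>
     (\<exists>VB EB. is_blowup VB EB VH EH \<and> VF \<subseteq> VB \<and> EF \<subseteq> EB)"

definition uniform_hypergraph :: "nat \<Rightarrow> nat \<Rightarrow> nat set set \<Rightarrow> bool" where
  "uniform_hypergraph r n HH \<longleftrightarrow> (\<forall>h\<in>HH. h \<subseteq> {0..<n} \<and> card h = r)"

definition contains_berge :: "'v set \<Rightarrow> 'v set set \<Rightarrow> 'a set \<Rightarrow> 'a set set \<Rightarrow> bool" where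
  "contains_berge V HH VF EF \<longleftrightarrow>
     (\<exists>\<psi> f. inj_on \<psi> VF \<and> \<psi> ` VF \<subseteq> V \<and> inj_on f EF \<and> f ` EF \<subseteq> HH \<and>
            (\<forall>e\<in>EF. \<psi> ` e \<subseteq> f e))"

definition berge_free :: "'v set \<Rightarrow> 'v set set \<Rightarrow> 'a set \<Rightarrow> 'a set set \<Rightarrow> bool" where
  "berge_free V HH VF EF \<longleftrightarrow> \<not> contains_berge V HH VF EF"

definition shadow :: "'v set set \<Rightarrow> 'v set set" where
  "shadow HH = {{u, v} | u v. u \<noteq> v \<and> (\<exists>h\<in>HH. u \<in> h \<and> v \<in> h)}"

text \<open>The set of copies (not necessarily induced subgraphs isomorphic to (VH,EH)) of H in G.\<close>
definition copies :: "'v set \<Rightarrow> 'v set set \<Rightarrow> 'b set \<Rightarrow> 'b set set \<Rightarrow> ('v set \<times> 'v set set) set" where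
  "copies VG EG VH EH = {(\<psi> ` VH, (\<lambda>e. \<psi> ` e) ` EH) | \<psi>.
      inj_on \<psi> VH \<and> \<psi> ` VH \<subseteq> VG \<and> (\<forall>e\<in>EH. \<psi> ` e \<in> EG)}"

text \<open>Generalized Berge Turan number (0 if there is no admissible hypergraph).\<close>
definition ex_hat :: "nat \<Rightarrow> nat \<Rightarrow> 'b set \<Rightarrow> 'b set set \<Rightarrow> 'a set \<Rightarrow> 'a set set \<Rightarrow> nat" where
  "ex_hat r n VH EH VF EF = Max (insert 0
     {card (copies {0..<n} (shadow HH) VH EH) | HH.
        uniform_hypergraph r n HH \<and> berge_free {0..<n} HH VF EF})"

end

theory Submission
  imports Defs "HOL-Library.FuncSet" "HOL-Analysis.Convex"
begin

(* Suppose the shadow of an r-uniform Berge-F-free hypergraph on n vertices contains at least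
   c n^|V(H)| copies of H. Then at least c n^|V(H)| maps V(H) -> [n] are homomorphisms of H into
   the shadow, and by Erdos' theorem on complete multipartite hypergraphs (which follows by
   induction on |V(H)| from the power-mean inequality) they contain a box: sets A_v of size T,
   v in V(H), such that every map choosing its values in the A_v is a homomorphism. Let pi map F
   into a blow-up of H. Choose a vertex of A_(pi x) for every vertex x of F, and for every edge of
   F a hyperedge covering its image. Of the T^|V(F)| choices at most |V(F)|^2 T^(|V(F)|-1) are
   not injective, and at most |E(F)|^2 r T^(|V(F)|-1) choose the same hyperedge for two edges.
   Hence for T > |V(F)|^2 + |E(F)|^2 r some choice is a Berge copy of F. *)

lemma convex_on_nonneg_power: "convex_on {0::real..} (\<lambda>x. x ^ p)"
  by (cases "even p") (auto intro: convex_on_subset[OF convex_power_even] convex_power_odd)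

lemma power_sum_le_card_power_mult_sum_power:
  fixes f :: "'a \<Rightarrow> real"
  assumes "finite I" and "\<And>i. i \<in> I \<Longrightarrow> 0 \<le> f i" and "0 < p"
  shows "(\<Sum>i\<in>I. f i) ^ p \<le> real (card I) ^ (p - 1) * (\<Sum>i\<in>I. f i ^ p)"
proof (cases "I = {}")
  case True
  with \<open>0 < p\<close> show ?thesis by (simp add: power_0_left)
next
  case False
  define N where "N = real (card I)"
  have "N > 0" using False assms(1) by (simp add: N_def card_gt_0_iff)
  have "(\<Sum>i\<in>I. (1 / N) *\<^sub>R f i) ^ p \<le> (\<Sum>i\<in>I. 1 / N * f i ^ p)"
    by (rule convex_on_sum[OF assms(1) False convex_on_nonneg_power]) (use assms \<open>N > 0\<close> N_def in auto)
  then have "(\<Sum>i\<in>I. f i) ^ p / N ^ p \<le> (\<Sum>i\<in>I. f i ^ p) / N"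
    by (simp add: power_divide flip: sum_divide_distrib)
  moreover have "N ^ p = N ^ (p - 1) * N" using \<open>0 < p\<close> by (simp add: power_eq_if)
  ultimately show ?thesis using \<open>N > 0\<close> by (simp add: N_def field_simps)
qed

lemma card_lists_not_distinct_le:
  assumes "finite A"
  shows "card {s. set s \<subseteq> A \<and> length s = T \<and> \<not> distinct s} * card A \<le> T ^ 2 * card A ^ T"
proof (induction T)
  case 0
  then show ?case by simp
next
  case (Suc T)
  define L where "L = {s. set s \<subseteq> A \<and> length s = T}"
  define ND where "ND = {s. set s \<subseteq> A \<and> length s = T \<and> \<not> distinct s}"
  have "finite L" using assms by (simp add: L_def finite_lists_length_eq)
  then have "finite ND" by (rule rev_finite_subset) (auto simp: L_def ND_def)
  have "{s. set s \<subseteq> A \<and> length s = Suc T \<and> \<not> distinct s}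
      \<subseteq> (\<lambda>(s, a). a # s) ` (SIGMA s:L. set s) \<union> (\<lambda>(a, s). a # s) ` (A \<times> ND)"
  proof
    fix s assume "s \<in> {s. set s \<subseteq> A \<and> length s = Suc T \<and> \<not> distinct s}"
    then obtain a s' where "s = a # s'" "a \<in> A" "s' \<in> L" "a \<in> set s' \<or> s' \<in> ND"
      by (cases s) (auto simp: L_def ND_def)
    then show "s \<in> (\<lambda>(s, a). a # s) ` (SIGMA s:L. set s) \<union> (\<lambda>(a, s). a # s) ` (A \<times> ND)"
      by force
  qed
  moreover have "finite (SIGMA s:L. set s)" and "finite (A \<times> ND)"
    using \<open>finite L\<close> \<open>finite ND\<close> assms by auto
  ultimately have "card {s. set s \<subseteq> A \<and> length s = Suc T \<and> \<not> distinct s}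
      \<le> card ((\<lambda>(s, a). a # s) ` (SIGMA s:L. set s) \<union> (\<lambda>(a, s). a # s) ` (A \<times> ND))"
    by (intro card_mono) auto
  also have "\<dots> \<le> card ((\<lambda>(s, a). a # s) ` (SIGMA s:L. set s)) + card ((\<lambda>(a, s). a # s) ` (A \<times> ND))"
    by (rule card_Un_le)
  also have "\<dots> \<le> card (SIGMA s:L. set s) + card (A \<times> ND)"
    by (intro add_mono card_image_le) fact+
  also have "card (SIGMA s:L. set s) \<le> T * card A ^ T"
  proof -
    have "card (SIGMA s:L. set s) = (\<Sum>s\<in>L. card (set s))" using \<open>finite L\<close> by simp
    also have "\<dots> \<le> (\<Sum>s\<in>L. T)" by (intro sum_mono) (auto simp: L_def card_length)
    finally show ?thesis using assms by (simp add: L_def card_lists_length_eq mult.commute)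
  qed
  finally have "card {s. set s \<subseteq> A \<and> length s = Suc T \<and> \<not> distinct s}
      \<le> T * card A ^ T + card A * card ND"
    by (simp add: card_cartesian_product)
  then have "card {s. set s \<subseteq> A \<and> length s = Suc T \<and> \<not> distinct s} * card A
      \<le> (T * card A ^ T + card A * card ND) * card A"
    by (rule mult_right_mono) simp
  also have "\<dots> = T * card A ^ Suc T + card A * (card ND * card A)"
    by (simp add: algebra_simps)
  also have "\<dots> \<le> T * card A ^ Suc T + card A * (T ^ 2 * card A ^ T)"
    using Suc.IH by (simp add: ND_def)
  also have "\<dots> \<le> Suc T ^ 2 * card A ^ Suc T"
    by (simp add: power2_eq_square algebra_simps)
  finally show ?case .
qed

lemma sum_card_common_neighbours_eq_sum_power_degree:
  assumes "finite X" and "finite Y"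
  shows "(\<Sum>s\<in>{s. set s \<subseteq> Y \<and> length s = T}. card {x\<in>X. \<forall>a\<in>set s. R x a})
       = (\<Sum>x\<in>X. card {a\<in>Y. R x a} ^ T)"
proof -
  let ?L = "{s. set s \<subseteq> Y \<and> length s = T}"
  have "finite ?L" using assms(2) by (simp add: finite_lists_length_eq)
  have "(\<Sum>s\<in>?L. card {x\<in>X. \<forall>a\<in>set s. R x a})
      = (\<Sum>s\<in>?L. \<Sum>x\<in>X. if \<forall>a\<in>set s. R x a then 1 else 0)"
    using assms(1) by (simp add: sum.If_cases Int_def)
  also have "\<dots> = (\<Sum>x\<in>X. \<Sum>s\<in>?L. if \<forall>a\<in>set s. R x a then 1 else 0)"
    by (rule sum.swap)
  also have "\<dots> = (\<Sum>x\<in>X. card {s. set s \<subseteq> {a\<in>Y. R x a} \<and> length s = T})"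
  proof (intro sum.cong refl)
    fix x
    have "{s. set s \<subseteq> {a\<in>Y. R x a} \<and> length s = T} = {s\<in>?L. \<forall>a\<in>set s. R x a}" by auto
    then show "(\<Sum>s\<in>?L. if \<forall>a\<in>set s. R x a then 1 else 0)
        = card {s. set s \<subseteq> {a\<in>Y. R x a} \<and> length s = T}"
      using \<open>finite ?L\<close> by (simp add: sum.If_cases Int_def)
  qed
  also have "\<dots> = (\<Sum>x\<in>X. card {a\<in>Y. R x a} ^ T)"
    using assms(2) by (simp add: card_lists_length_eq)
  finally show ?thesis .
qed

lemma card_subset_PiE_insert:
  assumes "finite I" and "i \<notin> I" and "\<And>j. j \<in> insert i I \<Longrightarrow> finite (B j)"
    and "E \<subseteq> PiE (insert i I) B"
  shows "card E = (\<Sum>g\<in>PiE I B. card {a \<in> B i. g(i := a) \<in> E})"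
proof -
  let ?S = "SIGMA g:PiE I B. {a \<in> B i. g(i := a) \<in> E}"
  have E_eq: "E = (\<lambda>(g, a). g(i := a)) ` ?S"
  proof
    show "E \<subseteq> (\<lambda>(g, a). g(i := a)) ` ?S"
    proof
      fix \<phi> assume "\<phi> \<in> E"
      with assms(4) have "\<phi> \<in> (\<lambda>(a, g). g(i := a)) ` (B i \<times> PiE I B)"
        unfolding PiE_insert_eq by (rule subsetD)
      then obtain a g where "a \<in> B i" "g \<in> PiE I B" "\<phi> = g(i := a)" by auto
      then show "\<phi> \<in> (\<lambda>(g, a). g(i := a)) ` ?S" using \<open>\<phi> \<in> E\<close> by force
    qed
  qed auto
  have inj: "inj_on (\<lambda>(g, a). g(i := a)) ?S"
  proof (rule inj_onI, clarify)
    fix g g' a a'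
    assume "g \<in> PiE I B" "g' \<in> PiE I B" and upd: "g(i := a) = g'(i := a')"
    then have "g i = g' i" using PiE_arb assms(2) by metis
    then show "g = g' \<and> a = a'" using upd fun_upd_eqD[OF upd] by (metis fun_upd_triv fun_upd_upd)
  qed
  have "finite (PiE I B)" using assms(1,3) by (intro finite_PiE) auto
  have "card E = card ((\<lambda>(g, a). g(i := a)) ` ?S)" using E_eq by (rule arg_cong)
  also have "\<dots> = card ?S" by (rule card_image[OF inj])
  also have "\<dots> = (\<Sum>g\<in>PiE I B. card {a \<in> B i. g(i := a) \<in> E})"
    using \<open>finite (PiE I B)\<close> assms(3) by (intro card_SigmaI) auto
  finally show ?thesis .
qed

lemma sum_card_links_ge:
  fixes E :: "('i \<Rightarrow> nat) set" and \<epsilon> :: real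
  assumes "finite I" and "i \<notin> I" and "0 < T" and "0 \<le> \<epsilon>"
    and "E \<subseteq> PiE (insert i I) (\<lambda>_. {..<n})"
    and "\<epsilon> * real n ^ Suc (card I) \<le> real (card E)"
  shows "\<epsilon> ^ T * real n ^ (T + card I)
    \<le> (\<Sum>s\<in>{s. set s \<subseteq> {..<n} \<and> length s = T}.
          real (card {g \<in> PiE I (\<lambda>_. {..<n}). \<forall>a\<in>set s. g(i := a) \<in> E}))"
proof (cases "n = 0")
  case True
  then show ?thesis using \<open>0 < T\<close> by (simp add: power_0_left sum_nonneg)
next
  case False
  let ?X = "PiE I (\<lambda>_. {..<n})"
  define d where "d g = card {a \<in> {..<n}. g(i := a) \<in> E}" for g
  have "finite ?X" using assms(1) by (simp add: finite_PiE)
  have "card E = (\<Sum>g\<in>?X. d g)"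
    unfolding d_def using assms(1,2,5) by (intro card_subset_PiE_insert) auto
  have "real n ^ (card I * (T - 1)) * (\<epsilon> ^ T * real n ^ (T + card I))
      = (\<epsilon> * real n ^ Suc (card I)) ^ T"
    using \<open>0 < T\<close> by (simp add: power_mult_distrib flip: power_mult power_add)
      (simp add: algebra_simps)
  also have "\<dots> \<le> (\<Sum>g\<in>?X. real (d g)) ^ T"
    using \<open>card E = _\<close> assms(4,6) by (intro power_mono) auto
  also have "\<dots> \<le> real (card ?X) ^ (T - 1) * (\<Sum>g\<in>?X. real (d g) ^ T)"
    using \<open>finite ?X\<close> \<open>0 < T\<close> by (intro power_sum_le_card_power_mult_sum_power) auto
  also have "\<dots> = real n ^ (card I * (T - 1)) * (\<Sum>s\<in>{s. set s \<subseteq> {..<n} \<and> length s = T}.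
          real (card {g \<in> ?X. \<forall>a\<in>set s. g(i := a) \<in> E}))"
    using sum_card_common_neighbours_eq_sum_power_degree[OF \<open>finite ?X\<close> finite_lessThan,
        where T = T and R = "\<lambda>g a. g(i := a) \<in> E"] assms(1)
    unfolding d_def by (simp add: card_funcsetE power_mult flip: of_nat_sum of_nat_power)
  finally show ?thesis
    by (rule mult_left_le_imp_le) (use False in simp)
qed

lemma exists_ge_if_card_mult_le_sum:
  fixes f :: "'a \<Rightarrow> real"
  assumes "finite A" and "0 < s" and "s \<le> (\<Sum>a\<in>A. f a)" and "real (card A) * m \<le> s"
  shows "\<exists>a\<in>A. m \<le> f a"
proof (rule ccontr)
  assume "\<not> ?thesis"
  then have small: "\<And>a. a \<in> A \<Longrightarrow> f a < m" by auto
  have "A \<noteq> {}" using assms(2,3) by auto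
  with assms(1) small have "(\<Sum>a\<in>A. f a) < real (card A) * m"
    by (intro sum_bounded_above_strict) (auto simp: card_gt_0_iff)
  with assms(3,4) show False by linarith
qed

lemma sum_card_links_not_distinct_le:
  fixes E :: "('i \<Rightarrow> nat) set" and \<epsilon> :: real
  assumes "finite I" and n_large: "2 * real T ^ 2 < \<epsilon> ^ T * real n"
  shows "(\<Sum>s\<in>{s. set s \<subseteq> {..<n} \<and> length s = T \<and> \<not> distinct s}.
            real (card {g \<in> PiE I (\<lambda>_. {..<n}). \<forall>a\<in>set s. g(i := a) \<in> E}))
         \<le> \<epsilon> ^ T / 2 * real n ^ (T + card I)"
proof -
  let ?X = "PiE I (\<lambda>_. {..<n})"
  let ?ND = "{s. set s \<subseteq> {..<n} \<and> length s = T \<and> \<not> distinct s}"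
  have "0 < n" using n_large by (cases n) auto
  have "real (card ?ND) * real n \<le> real T ^ 2 * real n ^ T"
    using card_lists_not_distinct_le[of "{..<n}" T] by (simp flip: of_nat_mult of_nat_power)
  also have "\<dots> \<le> \<epsilon> ^ T / 2 * real n ^ T * real n"
    using mult_right_mono[OF less_imp_le[OF n_large], of "real n ^ T / 2"]
    by (simp add: algebra_simps)
  finally have "real (card ?ND) \<le> \<epsilon> ^ T / 2 * real n ^ T"
    using \<open>0 < n\<close> by simp
  have "card {g \<in> ?X. \<forall>a\<in>set s. g(i := a) \<in> E} \<le> n ^ card I" for s
    using card_mono[of ?X] assms(1) by (simp add: finite_PiE card_funcsetE)
  then have "(\<Sum>s\<in>?ND. real (card {g \<in> ?X. \<forall>a\<in>set s. g(i := a) \<in> E}))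
      \<le> real (card ?ND) * real n ^ card I"
    by (intro sum_bounded_above) (simp flip: of_nat_power)
  also have "\<dots> \<le> \<epsilon> ^ T / 2 * real n ^ T * real n ^ card I"
    using \<open>real (card ?ND) \<le> _\<close> by (rule mult_right_mono) simp
  finally show ?thesis by (simp add: power_add mult.assoc)
qed

lemma dense_set_has_dense_link:
  fixes E :: "('i \<Rightarrow> nat) set" and \<epsilon> :: real
  assumes "finite I" and "i \<notin> I" and "0 < T" and "0 < \<epsilon>"
    and n_large: "2 * real T ^ 2 < \<epsilon> ^ T * real n"
    and E: "E \<subseteq> PiE (insert i I) (\<lambda>_. {..<n})" "\<epsilon> * real n ^ Suc (card I) \<le> real (card E)"
  obtains S where "S \<subseteq> {..<n}" and "card S = T"
    and "\<epsilon> ^ T / 2 * real n ^ card I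
      \<le> real (card {g \<in> PiE I (\<lambda>_. {..<n}). \<forall>a\<in>S. g(i := a) \<in> E})"
proof -
  define L where "L = {s. set s \<subseteq> {..<n} \<and> length s = T}"
  define link where
    "link s = real (card {g \<in> PiE I (\<lambda>_. {..<n}). \<forall>a\<in>set s. g(i := a) \<in> E})" for s
  define D where "D = {s \<in> L. distinct s}"
  define ND where "ND = {s. set s \<subseteq> {..<n} \<and> length s = T \<and> \<not> distinct s}"
  have "0 < n" using n_large \<open>0 < \<epsilon>\<close> by (cases n) auto
  have "finite L" by (simp add: L_def finite_lists_length_eq)
  have "L = D \<union> ND" and "D \<inter> ND = {}" by (auto simp: L_def D_def ND_def)
  then have "(\<Sum>s\<in>L. link s) = (\<Sum>s\<in>D. link s) + (\<Sum>s\<in>ND. link s)"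
    using \<open>finite L\<close> by (simp add: sum.union_disjoint)
  moreover have "\<epsilon> ^ T * real n ^ (T + card I) \<le> (\<Sum>s\<in>L. link s)"
    unfolding L_def link_def using assms(1-3) E \<open>0 < \<epsilon>\<close> by (intro sum_card_links_ge) auto
  moreover have "(\<Sum>s\<in>ND. link s) \<le> \<epsilon> ^ T / 2 * real n ^ (T + card I)"
    unfolding ND_def link_def using assms(1) n_large by (rule sum_card_links_not_distinct_le)
  ultimately have D_large: "\<epsilon> ^ T / 2 * real n ^ (T + card I) \<le> (\<Sum>s\<in>D. link s)"
    by linarith
  have "card D \<le> card L" using \<open>finite L\<close> by (intro card_mono) (auto simp: D_def)
  then have "real (card D) \<le> real n ^ T" by (simp add: L_def card_lists_length_eq)
  then have "real (card D) * (\<epsilon> ^ T / 2 * real n ^ card I)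
      \<le> real n ^ T * (\<epsilon> ^ T / 2 * real n ^ card I)"
    by (rule mult_right_mono) (use \<open>0 < \<epsilon>\<close> in simp)
  also have "\<dots> = \<epsilon> ^ T / 2 * real n ^ (T + card I)" by (simp add: power_add)
  finally have "real (card D) * (\<epsilon> ^ T / 2 * real n ^ card I) \<le> \<epsilon> ^ T / 2 * real n ^ (T + card I)" .
  moreover have "finite D" using \<open>finite L\<close> by (simp add: D_def)
  moreover have "0 < \<epsilon> ^ T / 2 * real n ^ (T + card I)" using \<open>0 < \<epsilon>\<close> \<open>0 < n\<close> by simp
  ultimately obtain s where "s \<in> D" and "\<epsilon> ^ T / 2 * real n ^ card I \<le> link s"
    using exists_ge_if_card_mult_le_sum[OF _ _ D_large] by blast
  then show ?thesis
    by (intro that[of "set s"]) (auto simp: D_def L_def link_def distinct_card)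
qed

lemma PiE_insert_fun_upd_subset:
  assumes "i \<notin> I" and "PiE I A \<subseteq> {g \<in> PiE I B. \<forall>a\<in>S. g(i := a) \<in> E}"
  shows "PiE (insert i I) (A(i := S)) \<subseteq> E"
proof
  fix \<phi> assume "\<phi> \<in> PiE (insert i I) (A(i := S))"
  moreover have "PiE I (A(i := S)) = PiE I A" using assms(1) by (intro PiE_cong) auto
  ultimately have "\<phi> \<in> (\<lambda>(a, g). g(i := a)) ` (S \<times> PiE I A)"
    unfolding PiE_insert_eq by simp
  then obtain a g where "a \<in> S" "g \<in> PiE I A" "\<phi> = g(i := a)" by auto
  then show "\<phi> \<in> E" using assms(2) by blast
qed

lemma eventually_dense_set_contains_box:
  fixes I :: "'i set" and \<epsilon> :: real
  assumes "finite I" and "0 < T" and "0 < \<epsilon>"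
  shows "\<forall>\<^sub>F n in sequentially. \<forall>E \<subseteq> PiE I (\<lambda>_. {..<n}).
           \<epsilon> * real n ^ card I \<le> real (card E) \<longrightarrow>
           (\<exists>A. (\<forall>i\<in>I. A i \<subseteq> {..<n} \<and> card (A i) = T) \<and> PiE I A \<subseteq> E)"
  using assms(1,3)
proof (induction I arbitrary: \<epsilon> rule: finite_induct)
  case empty
  show ?case
  proof (intro always_eventually allI impI)
    fix n and E :: "('i \<Rightarrow> nat) set"
    assume "E \<subseteq> PiE {} (\<lambda>_. {..<n})" and "\<epsilon> * real n ^ card {} \<le> real (card E)"
    then have "E \<noteq> {}" using \<open>0 < \<epsilon>\<close> by auto
    with \<open>E \<subseteq> PiE {} (\<lambda>_. {..<n})\<close> have "PiE {} A \<subseteq> E" for A :: "'i \<Rightarrow> nat set"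
      by (auto simp: PiE_empty_domain)
    then show "\<exists>A. (\<forall>i\<in>{}. A i \<subseteq> {..<n} \<and> card (A i) = T) \<and> PiE {} A \<subseteq> E" by blast
  qed
next
  case (insert i I)
  define \<delta> where "\<delta> = \<epsilon> ^ T / 2"
  have "0 < \<delta>" using \<open>0 < \<epsilon>\<close> by (simp add: \<delta>_def)
  have "\<forall>\<^sub>F n in sequentially. 2 * real T ^ 2 / \<epsilon> ^ T < real n"
    using filterlim_real_sequentially by (simp add: filterlim_at_top_dense)
  then have "\<forall>\<^sub>F n in sequentially. 2 * real T ^ 2 < \<epsilon> ^ T * real n"
    by eventually_elim (use \<open>0 < \<epsilon>\<close> in \<open>simp add: field_simps\<close>)
  with insert.IH[OF \<open>0 < \<delta>\<close>] show ?case
  proof eventually_elim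
    case (elim n)
    show ?case
    proof (intro allI impI)
      fix E assume E: "E \<subseteq> PiE (insert i I) (\<lambda>_. {..<n})"
        "\<epsilon> * real n ^ card (insert i I) \<le> real (card E)"
      have "\<epsilon> * real n ^ Suc (card I) \<le> real (card E)" using E(2) insert(1,2) by simp
      then obtain S where S: "S \<subseteq> {..<n}" "card S = T"
        and link: "\<delta> * real n ^ card I
          \<le> real (card {g \<in> PiE I (\<lambda>_. {..<n}). \<forall>a\<in>S. g(i := a) \<in> E})"
        unfolding \<delta>_def
        by (rule dense_set_has_dense_link[OF insert(1,2) \<open>0 < T\<close> \<open>0 < \<epsilon>\<close> elim(2) E(1)])
      have "{g \<in> PiE I (\<lambda>_. {..<n}). \<forall>a\<in>S. g(i := a) \<in> E} \<subseteq> PiE I (\<lambda>_. {..<n})" by blast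
      from elim(1)[rule_format, OF this link] obtain A
        where A: "\<forall>j\<in>I. A j \<subseteq> {..<n} \<and> card (A j) = T"
        and box: "PiE I A \<subseteq> {g \<in> PiE I (\<lambda>_. {..<n}). \<forall>a\<in>S. g(i := a) \<in> E}"
        by blast
      have "PiE (insert i I) (A(i := S)) \<subseteq> E"
        using insert(2) box by (rule PiE_insert_fun_upd_subset)
      moreover have "\<forall>j\<in>insert i I. (A(i := S)) j \<subseteq> {..<n} \<and> card ((A(i := S)) j) = T"
        using A S by simp
      ultimately show "\<exists>A. (\<forall>j\<in>insert i I. A j \<subseteq> {..<n} \<and> card (A j) = T)
          \<and> PiE (insert i I) A \<subseteq> E" by blast
    qed
  qed
qed

lemma card_PiE_component_in_le:
  fixes Q :: "'a \<Rightarrow> 'c set" and G :: "('a \<Rightarrow> 'c) \<Rightarrow> 'c set"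
  assumes "finite V" and "w \<in> V" and Q: "\<And>x. x \<in> V \<Longrightarrow> finite (Q x) \<and> card (Q x) = T"
    and G: "\<And>g. g \<in> PiE (V - {w}) Q \<Longrightarrow> finite (G g) \<and> card (G g) \<le> c"
  shows "card {\<phi> \<in> PiE V Q. \<phi> w \<in> G (restrict \<phi> (V - {w}))} \<le> c * T ^ (card V - 1)"
proof -
  let ?S = "SIGMA g:PiE (V - {w}) Q. G g"
  have "finite (PiE (V - {w}) Q)" using assms(1) Q by (intro finite_PiE) auto
  have "{\<phi> \<in> PiE V Q. \<phi> w \<in> G (restrict \<phi> (V - {w}))} \<subseteq> (\<lambda>(g, a). g(w := a)) ` ?S"
  proof
    fix \<phi> assume \<phi>: "\<phi> \<in> {\<phi> \<in> PiE V Q. \<phi> w \<in> G (restrict \<phi> (V - {w}))}"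
    then have "\<phi> \<in> PiE V Q" by blast
    then have "(restrict \<phi> (V - {w}))(w := \<phi> w) = \<phi>"
      using \<open>w \<in> V\<close> by (simp add: insert_absorb PiE_restrict)
    moreover have "restrict \<phi> (V - {w}) \<in> PiE (V - {w}) Q"
      using \<open>\<phi> \<in> PiE V Q\<close> unfolding restrict_PiE_iff by (blast intro: PiE_mem)
    ultimately show "\<phi> \<in> (\<lambda>(g, a). g(w := a)) ` ?S"
      using \<phi> by (intro image_eqI[of _ _ "(restrict \<phi> (V - {w}), \<phi> w)"] SigmaI) simp_all
  qed
  moreover have "finite ?S"
    using \<open>finite (PiE (V - {w}) Q)\<close> by (intro finite_SigmaI) (simp_all add: G)
  ultimately have "card {\<phi> \<in> PiE V Q. \<phi> w \<in> G (restrict \<phi> (V - {w}))} \<le> card ?S"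
    by (meson card_image_le card_mono finite_imageI order_trans)
  also have "\<dots> = (\<Sum>g\<in>PiE (V - {w}) Q. card (G g))"
    using \<open>finite (PiE (V - {w}) Q)\<close> G by (intro card_SigmaI) auto
  also have "\<dots> \<le> card (PiE (V - {w}) Q) * c"
    using G sum_bounded_above[of "PiE (V - {w}) Q" "\<lambda>g. card (G g)" c] by simp
  also have "card (PiE (V - {w}) Q) = (\<Prod>x\<in>V - {w}. card (Q x))"
    using assms(1) by (simp add: card_PiE)
  also have "\<dots> = T ^ (card V - 1)"
    using assms(1,2) Q by simp
  finally show ?thesis by (simp only: mult.commute)
qed

lemma card_PiE_collision_le:
  assumes "finite V" and "x \<in> V" and "y \<in> V" and "x \<noteq> y"
    and "\<And>v. v \<in> V \<Longrightarrow> finite (Q v) \<and> card (Q v) = T"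
  shows "card {\<phi> \<in> PiE V Q. \<phi> x = \<phi> y} \<le> T ^ (card V - 1)"
proof -
  have "{\<phi> \<in> PiE V Q. \<phi> x = \<phi> y} = {\<phi> \<in> PiE V Q. \<phi> y \<in> {restrict \<phi> (V - {y}) x}}"
    using assms(2,4) by auto
  also have "card \<dots> \<le> 1 * T ^ (card V - 1)"
    by (rule card_PiE_component_in_le) (use assms in auto)
  finally show ?thesis by simp
qed

(* The default {} keeps covering_edge HH S of size at most r also for uncovered S. *)
definition covering_edge :: "'v set set \<Rightarrow> 'v set \<Rightarrow> 'v set" where
  "covering_edge HH S = (if \<exists>h\<in>HH. S \<subseteq> h then SOME h. h \<in> HH \<and> S \<subseteq> h else {})"

lemma covering_edge_covers:
  assumes "\<exists>h\<in>HH. S \<subseteq> h"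
  shows "covering_edge HH S \<in> HH" and "S \<subseteq> covering_edge HH S"
  using someI_ex[of "\<lambda>h. h \<in> HH \<and> S \<subseteq> h"] assms by (auto simp: covering_edge_def)

lemma covering_edge_card_le:
  assumes "\<forall>h\<in>HH. finite h \<and> card h \<le> r"
  shows "finite (covering_edge HH S) \<and> card (covering_edge HH S) \<le> r"
proof (cases "\<exists>h\<in>HH. S \<subseteq> h")
  case True
  then show ?thesis using covering_edge_covers(1) assms by blast
qed (simp add: covering_edge_def)

lemma card_PiE_same_covering_edge_le:
  assumes "graph V E" and "e1 \<in> E" and "e2 \<in> E" and "e1 \<noteq> e2"
    and HH: "\<forall>h\<in>HH. finite h \<and> card h \<le> r"
    and Q: "\<And>v. v \<in> V \<Longrightarrow> finite (Q v) \<and> card (Q v) = T"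
    and covered: "\<And>\<phi>. \<phi> \<in> PiE V Q \<Longrightarrow> \<exists>h\<in>HH. \<phi> ` e2 \<subseteq> h"
  shows "card {\<phi> \<in> PiE V Q. covering_edge HH (\<phi> ` e1) = covering_edge HH (\<phi> ` e2)}
    \<le> r * T ^ (card V - 1)"
proof -
  have "finite V" and e: "e1 \<subseteq> V" "e2 \<subseteq> V" "card e1 = 2" "card e2 = 2"
    using assms(1-3) by (auto simp: graph_def)
  have "\<not> e2 \<subseteq> e1"
    using e \<open>finite V\<close> \<open>e1 \<noteq> e2\<close> by (metis card_subset_eq finite_subset)
  then obtain w where "w \<in> e2" "w \<notin> e1" by blast
  \<comment> \<open>If both edges get the same hyperedge, then \<open>\<phi> w\<close> lies in the hyperedge chosen for
    \<open>e1\<close>, which does not depend on \<open>\<phi> w\<close>: at most r values are left for \<open>\<phi> w\<close>.\<close>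
  then have "w \<in> V" and e1_w: "e1 \<subseteq> V - {w}" using e by auto
  have "{\<phi> \<in> PiE V Q. covering_edge HH (\<phi> ` e1) = covering_edge HH (\<phi> ` e2)}
      \<subseteq> {\<phi> \<in> PiE V Q. \<phi> w \<in> covering_edge HH (restrict \<phi> (V - {w}) ` e1)}"
  proof
    fix \<phi> assume "\<phi> \<in> {\<phi> \<in> PiE V Q. covering_edge HH (\<phi> ` e1) = covering_edge HH (\<phi> ` e2)}"
    then have "\<phi> \<in> PiE V Q" and same: "covering_edge HH (\<phi> ` e1) = covering_edge HH (\<phi> ` e2)"
      by blast+
    have "\<phi> w \<in> covering_edge HH (\<phi> ` e2)"
      using covering_edge_covers(2)[OF covered[OF \<open>\<phi> \<in> PiE V Q\<close>]] \<open>w \<in> e2\<close> by blast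
    moreover have "restrict \<phi> (V - {w}) ` e1 = \<phi> ` e1" using e1_w by (auto simp: restrict_def)
    ultimately show "\<phi> \<in> {\<phi> \<in> PiE V Q. \<phi> w \<in> covering_edge HH (restrict \<phi> (V - {w}) ` e1)}"
      using same \<open>\<phi> \<in> PiE V Q\<close> by (simp del: PiE_iff)
  qed
  moreover have "finite {\<phi> \<in> PiE V Q. \<phi> w \<in> covering_edge HH (restrict \<phi> (V - {w}) ` e1)}"
    using \<open>finite V\<close> Q by (intro finite_subset[OF _ finite_PiE[of V Q]]) auto
  ultimately have "card {\<phi> \<in> PiE V Q. covering_edge HH (\<phi> ` e1) = covering_edge HH (\<phi> ` e2)}
      \<le> card {\<phi> \<in> PiE V Q. \<phi> w \<in> covering_edge HH (restrict \<phi> (V - {w}) ` e1)}"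
    by (rule card_mono[rotated])
  also have "\<dots> \<le> r * T ^ (card V - 1)"
    using \<open>finite V\<close> \<open>w \<in> V\<close> Q covering_edge_card_le[OF HH]
    by (rule card_PiE_component_in_le)
  finally show ?thesis .
qed

lemma card_UN_le_card_mult:
  assumes "finite P" and "\<And>p. p \<in> P \<Longrightarrow> card (B p) \<le> b"
  shows "card (\<Union>p\<in>P. B p) \<le> card P * b"
  using card_UN_le[OF assms(1), of B] sum_bounded_above[of P "\<lambda>p. card (B p)" b] assms(2)
  by (simp add: le_trans)

lemma card_non_injective_choices_le:
  fixes Q :: "'a \<Rightarrow> 'v set"
  assumes F: "graph VF EF" and HH: "\<forall>h\<in>HH. finite h \<and> card h \<le> r"
    and Q: "\<And>x. x \<in> VF \<Longrightarrow> finite (Q x) \<and> card (Q x) = T"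
    and covered: "\<And>\<phi> e. \<phi> \<in> PiE VF Q \<Longrightarrow> e \<in> EF \<Longrightarrow> \<exists>h\<in>HH. \<phi> ` e \<subseteq> h"
  shows "card {\<phi> \<in> PiE VF Q. \<not> inj_on \<phi> VF \<or> \<not> inj_on (\<lambda>e. covering_edge HH (\<phi> ` e)) EF}
    \<le> (card VF ^ 2 + card EF ^ 2 * r) * T ^ (card VF - 1)"
proof -
  let ?c = "\<lambda>\<phi> e. covering_edge HH (\<phi> ` e)"
  define P1 where "P1 = {(x, y) \<in> VF \<times> VF. x \<noteq> y}"
  define P2 where "P2 = {(e1, e2) \<in> EF \<times> EF. e1 \<noteq> e2}"
  define B1 where "B1 = (\<Union>(x, y)\<in>P1. {\<phi> \<in> PiE VF Q. \<phi> x = \<phi> y})"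
  define B2 where "B2 = (\<Union>(e1, e2)\<in>P2. {\<phi> \<in> PiE VF Q. ?c \<phi> e1 = ?c \<phi> e2})"
  have "finite VF" and "finite EF"
    using F by (auto simp: graph_def intro: finite_subset[of EF "Pow VF"])
  have "P1 \<subseteq> VF \<times> VF" and "P2 \<subseteq> EF \<times> EF" by (auto simp: P1_def P2_def)
  then have "finite P1" and "finite P2" and "card P1 \<le> card VF ^ 2" and "card P2 \<le> card EF ^ 2"
    using \<open>finite VF\<close> \<open>finite EF\<close> card_mono[of "VF \<times> VF" P1] card_mono[of "EF \<times> EF" P2]
    by (auto simp: card_cartesian_product power2_eq_square intro: finite_subset)
  have "{\<phi> \<in> PiE VF Q. \<not> inj_on \<phi> VF \<or> \<not> inj_on (?c \<phi>) EF} \<subseteq> B1 \<union> B2"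
    by (auto simp: B1_def B2_def P1_def P2_def inj_on_def)
  moreover have "finite (B1 \<union> B2)"
    using \<open>finite VF\<close> Q unfolding B1_def B2_def
    by (intro finite_subset[OF _ finite_PiE[of VF Q]]) blast+
  ultimately have "card {\<phi> \<in> PiE VF Q. \<not> inj_on \<phi> VF \<or> \<not> inj_on (?c \<phi>) EF} \<le> card (B1 \<union> B2)"
    by (rule card_mono[rotated])
  also have "\<dots> \<le> card P1 * T ^ (card VF - 1) + card P2 * (r * T ^ (card VF - 1))"
    unfolding B1_def B2_def
  proof (rule order_trans[OF card_Un_le add_mono]; rule card_UN_le_card_mult)
    show "finite P1" "finite P2" by fact+
    show "card (case p of (x, y) \<Rightarrow> {\<phi> \<in> PiE VF Q. \<phi> x = \<phi> y}) \<le> T ^ (card VF - 1)"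
      if p: "p \<in> P1" for p
    proof -
      obtain x y where "p = (x, y)" "x \<in> VF" "y \<in> VF" "x \<noteq> y" using p by (auto simp: P1_def)
      then show ?thesis using card_PiE_collision_le[OF \<open>finite VF\<close> _ _ _ Q] by simp
    qed
    show "card (case p of (e1, e2) \<Rightarrow> {\<phi> \<in> PiE VF Q. ?c \<phi> e1 = ?c \<phi> e2}) \<le> r * T ^ (card VF - 1)"
      if p: "p \<in> P2" for p
    proof -
      obtain e1 e2 where "p = (e1, e2)" "e1 \<in> EF" "e2 \<in> EF" "e1 \<noteq> e2"
        using p by (auto simp: P2_def)
      then show ?thesis
        using card_PiE_same_covering_edge_le[OF F _ _ _ HH Q covered] by simp
    qed
  qed
  also have "\<dots> \<le> (card VF ^ 2 + card EF ^ 2 * r) * T ^ (card VF - 1)"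
    using \<open>card P1 \<le> _\<close> \<open>card P2 \<le> _\<close> by (simp add: algebra_simps add_mono mult_right_mono)
  finally show ?thesis .
qed

lemma ex_PiE_inj_on_covering_edges:
  fixes Q :: "'a \<Rightarrow> 'v set"
  assumes F: "graph VF EF" and "VF \<noteq> {}" and HH: "\<forall>h\<in>HH. finite h \<and> card h \<le> r"
    and Q: "\<And>x. x \<in> VF \<Longrightarrow> finite (Q x) \<and> card (Q x) = T"
    and covered: "\<And>\<phi> e. \<phi> \<in> PiE VF Q \<Longrightarrow> e \<in> EF \<Longrightarrow> \<exists>h\<in>HH. \<phi> ` e \<subseteq> h"
    and T_large: "card VF ^ 2 + card EF ^ 2 * r < T"
  obtains \<phi> where "\<phi> \<in> PiE VF Q" and "inj_on \<phi> VF"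
    and "inj_on (\<lambda>e. covering_edge HH (\<phi> ` e)) EF"
proof -
  let ?Bad = "{\<phi> \<in> PiE VF Q. \<not> inj_on \<phi> VF \<or> \<not> inj_on (\<lambda>e. covering_edge HH (\<phi> ` e)) EF}"
  have "finite VF" using F by (simp add: graph_def)
  have "card ?Bad \<le> (card VF ^ 2 + card EF ^ 2 * r) * T ^ (card VF - 1)"
    using F HH Q covered by (rule card_non_injective_choices_le)
  also have "\<dots> < T * T ^ (card VF - 1)"
    using T_large by (intro mult_strict_right_mono) auto
  also have "\<dots> = card (PiE VF Q)"
    using \<open>finite VF\<close> \<open>VF \<noteq> {}\<close> Q by (simp add: card_PiE card_gt_0_iff flip: power_Suc)
  finally have "card ?Bad < card (PiE VF Q)" .
  moreover have "finite ?Bad"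
    using \<open>finite VF\<close> Q by (intro finite_subset[OF _ finite_PiE[of VF Q]]) blast+
  ultimately have "\<not> PiE VF Q \<subseteq> ?Bad" by (meson card_mono not_le)
  then show thesis using that by blast
qed

lemma contains_berge_if_choices_covered:
  fixes Q :: "'a \<Rightarrow> 'v set"
  assumes F: "graph VF EF" and HH: "\<forall>h\<in>HH. finite h \<and> card h \<le> r"
    and Q: "\<And>x. x \<in> VF \<Longrightarrow> Q x \<subseteq> V \<and> finite (Q x) \<and> card (Q x) = T"
    and covered: "\<And>\<phi> e. \<phi> \<in> PiE VF Q \<Longrightarrow> e \<in> EF \<Longrightarrow> \<exists>h\<in>HH. \<phi> ` e \<subseteq> h"
    and T_large: "card VF ^ 2 + card EF ^ 2 * r < T"
  shows "contains_berge V HH VF EF"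
proof (cases "VF = {}")
  case True
  with F have "EF = {}" by (force simp: graph_def)
  with True show ?thesis by (simp add: contains_berge_def)
next
  case False
  have "\<And>x. x \<in> VF \<Longrightarrow> finite (Q x) \<and> card (Q x) = T" using Q by blast
  then obtain \<phi> where "\<phi> \<in> PiE VF Q" and "inj_on \<phi> VF"
    and "inj_on (\<lambda>e. covering_edge HH (\<phi> ` e)) EF"
    using ex_PiE_inj_on_covering_edges[OF F False HH _ covered T_large] by blast
  moreover have "covering_edge HH (\<phi> ` e) \<in> HH" and "\<phi> ` e \<subseteq> covering_edge HH (\<phi> ` e)"
    if "e \<in> EF" for e
    using covering_edge_covers[OF covered[OF \<open>\<phi> \<in> PiE VF Q\<close> that]] by blast+
  moreover have "\<phi> ` VF \<subseteq> V" using \<open>\<phi> \<in> PiE VF Q\<close> Q by (blast dest: PiE_mem)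
  ultimately show ?thesis
    unfolding contains_berge_def by blast
qed

lemma subgraph_of_blowupE:
  assumes "subgraph_of_blowup VF EF VH EH"
  obtains \<pi> where "\<pi> ` VF \<subseteq> VH" and "\<And>e. e \<in> EF \<Longrightarrow> \<exists>x y. e = {x, y} \<and> {\<pi> x, \<pi> y} \<in> EH"
proof -
  obtain VB EB where "is_blowup VB EB VH EH" and "VF \<subseteq> VB" and "EF \<subseteq> EB"
    using assms unfolding subgraph_of_blowup_def by blast
  then obtain \<pi> where "\<pi> ` VB \<subseteq> VH"
    and EB: "EB = {{x, y} | x y. x \<in> VB \<and> y \<in> VB \<and> {\<pi> x, \<pi> y} \<in> EH}"
    unfolding is_blowup_def by blast
  show thesis
  proof (rule that)
    show "\<pi> ` VF \<subseteq> VH" using \<open>\<pi> ` VB \<subseteq> VH\<close> \<open>VF \<subseteq> VB\<close> by blast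
    show "\<exists>x y. e = {x, y} \<and> {\<pi> x, \<pi> y} \<in> EH" if "e \<in> EF" for e
      using that \<open>EF \<subseteq> EB\<close> unfolding EB by blast
  qed
qed

lemma shadow_edge_covered: "e \<in> shadow HH \<Longrightarrow> \<exists>h\<in>HH. e \<subseteq> h"
  unfolding shadow_def by blast

lemma card_copies_le_card_homomorphisms:
  fixes n :: nat
  assumes "graph VH EH"
  shows "card (copies {0..<n} EG VH EH) \<le> card {\<psi> \<in> PiE VH (\<lambda>_. {..<n}). \<forall>e\<in>EH. \<psi> ` e \<in> EG}"
proof -
  let ?hom = "{\<psi> \<in> PiE VH (\<lambda>_. {..<n}). \<forall>e\<in>EH. \<psi> ` e \<in> EG}"
  have "finite VH" and EH: "\<And>e. e \<in> EH \<Longrightarrow> e \<subseteq> VH" using assms by (auto simp: graph_def)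
  have "finite ?hom" using \<open>finite VH\<close> by (intro finite_subset[OF _ finite_PiE[of VH "\<lambda>_. {..<n}"]]) auto
  have "copies {0..<n} EG VH EH \<subseteq> (\<lambda>\<psi>. (\<psi> ` VH, (\<lambda>e. \<psi> ` e) ` EH)) ` ?hom"
  proof
    fix p assume "p \<in> copies {0..<n} EG VH EH"
    then obtain \<psi> where p: "p = (\<psi> ` VH, (\<lambda>e. \<psi> ` e) ` EH)"
      and "\<psi> ` VH \<subseteq> {0..<n}" and hom: "\<forall>e\<in>EH. \<psi> ` e \<in> EG"
      unfolding copies_def by blast
    have image_eq: "restrict \<psi> VH ` e = \<psi> ` e" if "e \<subseteq> VH" for e
      using that by (auto simp: restrict_def)
    have "restrict \<psi> VH \<in> ?hom"
      using \<open>\<psi> ` VH \<subseteq> {0..<n}\<close> hom EH image_eq by (auto simp: restrict_PiE_iff)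
    moreover have "p = (restrict \<psi> VH ` VH, (\<lambda>e. restrict \<psi> VH ` e) ` EH)"
      using p EH image_eq by (auto intro!: image_cong)
    ultimately show "p \<in> (\<lambda>\<psi>. (\<psi> ` VH, (\<lambda>e. \<psi> ` e) ` EH)) ` ?hom" by blast
  qed
  then show ?thesis
    using \<open>finite ?hom\<close> by (meson card_image_le card_mono finite_imageI le_trans)
qed

lemma edges_covered_if_box_in_shadow:
  assumes "graph VF EF" and "graph VH EH"
    and blowup: "\<pi> ` VF \<subseteq> VH" "\<And>e. e \<in> EF \<Longrightarrow> \<exists>x y. e = {x, y} \<and> {\<pi> x, \<pi> y} \<in> EH"
    and nonempty: "\<And>v. v \<in> VH \<Longrightarrow> A v \<noteq> {}"
    and box: "\<And>\<psi> e. \<psi> \<in> PiE VH A \<Longrightarrow> e \<in> EH \<Longrightarrow> \<psi> ` e \<in> shadow HH"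
    and "\<phi> \<in> PiE VF (\<lambda>x. A (\<pi> x))" and "e \<in> EF"
  shows "\<exists>h\<in>HH. \<phi> ` e \<subseteq> h"
proof -
  obtain x y where e: "e = {x, y}" and "{\<pi> x, \<pi> y} \<in> EH" using blowup(2) \<open>e \<in> EF\<close> by blast
  then have "\<pi> x \<noteq> \<pi> y" using assms(2) by (force simp: graph_def)
  have "x \<in> VF" "y \<in> VF" using assms(1) \<open>e \<in> EF\<close> e by (auto simp: graph_def)
  then have "\<phi> x \<in> A (\<pi> x)" "\<phi> y \<in> A (\<pi> y)" "\<pi> x \<in> VH" "\<pi> y \<in> VH"
    using \<open>\<phi> \<in> PiE VF (\<lambda>x. A (\<pi> x))\<close> blowup(1) by (auto dest: PiE_mem)
  define \<psi> where "\<psi> = restrict (\<lambda>v. if v = \<pi> x then \<phi> x else if v = \<pi> y then \<phi> y else SOME a. a \<in> A v) VH"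
  have "\<psi> \<in> PiE VH A"
    unfolding \<psi>_def restrict_PiE_iff using \<open>\<phi> x \<in> A (\<pi> x)\<close> \<open>\<phi> y \<in> A (\<pi> y)\<close> nonempty
    by (auto simp: some_in_eq)
  moreover have "\<psi> ` {\<pi> x, \<pi> y} = \<phi> ` e"
    using \<open>\<pi> x \<noteq> \<pi> y\<close> \<open>\<pi> x \<in> VH\<close> \<open>\<pi> y \<in> VH\<close> e by (auto simp: \<psi>_def)
  ultimately show ?thesis
    using box[OF _ \<open>{\<pi> x, \<pi> y} \<in> EH\<close>] shadow_edge_covered by metis
qed

lemma contains_berge_if_shadow_contains_blowup:
  assumes "graph VF EF" and "graph VH EH"
    and blowup: "\<pi> ` VF \<subseteq> VH" "\<And>e. e \<in> EF \<Longrightarrow> \<exists>x y. e = {x, y} \<and> {\<pi> x, \<pi> y} \<in> EH"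
    and HH: "uniform_hypergraph r n HH"
    and A: "\<And>v. v \<in> VH \<Longrightarrow> A v \<subseteq> {..<n} \<and> card (A v) = T"
    and T_large: "card VF ^ 2 + card EF ^ 2 * r < T"
    and box: "\<And>\<psi> e. \<psi> \<in> PiE VH A \<Longrightarrow> e \<in> EH \<Longrightarrow> \<psi> ` e \<in> shadow HH"
  shows "contains_berge {0..<n} HH VF EF"
proof (rule contains_berge_if_choices_covered[OF assms(1), where Q = "\<lambda>x. A (\<pi> x)" and T = T])
  show "\<forall>h\<in>HH. finite h \<and> card h \<le> r"
    using HH by (auto simp: uniform_hypergraph_def intro: finite_subset)
  show "A (\<pi> x) \<subseteq> {0..<n} \<and> finite (A (\<pi> x)) \<and> card (A (\<pi> x)) = T" if "x \<in> VF" for x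
    using A[of "\<pi> x"] blowup(1) that by (auto simp: lessThan_atLeast0 intro: finite_subset)
  have "A v \<noteq> {}" if "v \<in> VH" for v
    using A[OF that] T_large by auto
  then show "\<exists>h\<in>HH. \<phi> ` e \<subseteq> h" if "\<phi> \<in> PiE VF (\<lambda>x. A (\<pi> x))" and "e \<in> EF" for \<phi> e
    using edges_covered_if_box_in_shadow[OF assms(1,2) blowup _ box that] by blast
qed (use T_large in simp)

lemma eventually_card_copies_in_shadow_le:
  fixes VF :: "'a set" and VH :: "'b set" and c :: real
  assumes "graph VF EF" and "graph VH EH" and "subgraph_of_blowup VF EF VH EH" and "0 < c"
  shows "\<forall>\<^sub>F n in sequentially. \<forall>HH. uniform_hypergraph r n HH \<and> berge_free {0..<n} HH VF EF \<longrightarrow>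
           real (card (copies {0..<n} (shadow HH) VH EH)) \<le> c * real n ^ card VH"
proof -
  obtain \<pi> where blowup: "\<pi> ` VF \<subseteq> VH" "\<And>e. e \<in> EF \<Longrightarrow> \<exists>x y. e = {x, y} \<and> {\<pi> x, \<pi> y} \<in> EH"
    using subgraph_of_blowupE[OF assms(3)] by blast
  define T where "T = card VF ^ 2 + card EF ^ 2 * r + 1"
  have "finite VH" using assms(2) by (simp add: graph_def)
  moreover have "0 < T" by (simp add: T_def)
  ultimately have "\<forall>\<^sub>F n in sequentially. \<forall>E \<subseteq> PiE VH (\<lambda>_. {..<n}).
      c * real n ^ card VH \<le> real (card E) \<longrightarrow>
      (\<exists>A. (\<forall>v\<in>VH. A v \<subseteq> {..<n} \<and> card (A v) = T) \<and> PiE VH A \<subseteq> E)"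
    using \<open>0 < c\<close> by (rule eventually_dense_set_contains_box)
  then show ?thesis
  proof eventually_elim
    case (elim n)
    show ?case
    proof (intro allI impI, elim conjE)
      fix HH assume HH: "uniform_hypergraph r n HH" and free: "berge_free {0..<n} HH VF EF"
      define hom where "hom = {\<psi> \<in> PiE VH (\<lambda>_. {..<n}). \<forall>e\<in>EH. \<psi> ` e \<in> shadow HH}"
      have "real (card hom) \<le> c * real n ^ card VH"
      proof (rule ccontr)
        assume "\<not> ?thesis"
        then obtain A where A: "\<forall>v\<in>VH. A v \<subseteq> {..<n} \<and> card (A v) = T" and "PiE VH A \<subseteq> hom"
          using elim[rule_format, of hom] by (force simp: hom_def T_def)
        then have "contains_berge {0..<n} HH VF EF"
          by (intro contains_berge_if_shadow_contains_blowup[OF assms(1,2) blowup HH, of A T])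
            (auto simp: hom_def T_def)
        with free show False by (simp add: berge_free_def)
      qed
      with card_copies_le_card_homomorphisms[OF assms(2), of n "shadow HH"]
      show "real (card (copies {0..<n} (shadow HH) VH EH)) \<le> c * real n ^ card VH"
        unfolding hom_def by linarith
    qed
  qed
qed

lemma ex_hat_le:
  assumes "0 \<le> b"
    and "\<And>HH. uniform_hypergraph r n HH \<Longrightarrow> berge_free {0..<n} HH VF EF
           \<Longrightarrow> real (card (copies {0..<n} (shadow HH) VH EH)) \<le> b"
  shows "real (ex_hat r n VH EH VF EF) \<le> b"
proof -
  let ?S = "insert 0 {card (copies {0..<n} (shadow HH) VH EH) | HH.
              uniform_hypergraph r n HH \<and> berge_free {0..<n} HH VF EF}"
  have bounded: "\<forall>k\<in>?S. real k \<le> b" using assms by auto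
  then have "?S \<subseteq> {..nat \<lfloor>b\<rfloor>}" by (auto simp: le_nat_floor)
  then have "finite ?S" by (rule finite_subset) simp
  then have "Max ?S \<in> ?S" by (intro Max_in) auto
  with bounded have "real (Max ?S) \<le> b" by blast
  then show ?thesis unfolding ex_hat_def .
qed

theorem corollary8:
  fixes VF :: "'a set" and EF :: "'a set set" and VH :: "'b set" and EH :: "'b set set"
    and r :: nat
  assumes "graph VF EF" and "graph VH EH"
    and "subgraph_of_blowup VF EF VH EH"
    and "r \<ge> card VF"
  shows "(\<lambda>n. real (ex_hat r n VH EH VF EF)) \<in> o(\<lambda>n. real n ^ card VH)"
proof (rule landau_o.smallI)
  fix c :: real assume "0 < c"
  with assms(1-3) have "\<forall>\<^sub>F n in sequentially. \<forall>HH.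
      uniform_hypergraph r n HH \<and> berge_free {0..<n} HH VF EF \<longrightarrow>
      real (card (copies {0..<n} (shadow HH) VH EH)) \<le> c * real n ^ card VH"
    by (rule eventually_card_copies_in_shadow_le)
  then show "\<forall>\<^sub>F n in sequentially. norm (real (ex_hat r n VH EH VF EF)) \<le> c * norm (real n ^ card VH)"
    by eventually_elim (use \<open>0 < c\<close> in \<open>auto intro: ex_hat_le\<close>)
qed

end
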